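(* Let $\theta_0:\mathbb{R}^d\to\mathbb{R}^{d_\theta}$ be measurable and for each $N\ge1$ let $\hat\theta_N$ be a (possibly random) $\mathbb{R}^{d_\theta}$-valued estimator built from data independent of $X^s,X^t$. Suppose (i) $\|\hat\theta_N(X^s)\|_\infty\le\xi_N$ a.s. for every $N\ge1$; (ii) $\mathbb{E}\|\theta_0(X^s)\|_\infty^8<\infty$; (iii) there are constants $c>0$, $m\ge0$ with $r_0(x)\le c(\|x\|_\infty^m+1)$ for all $x$; (iv) $\mathbb{E}[r_0(X^s)^2]<\infty$; (v) $\mathbb{E}\exp(\varsigma\|X^s\|_\infty)<\infty$ for some constant $\varsigma>0$. Then for $N\ge2$, $$\mathbb{E}\|\hat\theta_N(X^t)-\theta_0(X^t)\|_2^2=\mathbb{E}\big[\|\hat\theta_N(X^s)-\theta_0(X^s)\|_2^2r_0(X^s)\big]\le c_1(\log N)^m\,\mathbb{E}\|\hat\theta_N(X^s)-\theta_0(X^s)\|_2^2+\frac{c_2d_\theta(\xi_N^2+1)}{N},$$ with constants $c_1,c_2$ not depending on $N$.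
   Context: $X^s,X^t$ are random vectors in $\mathbb{R}^d$ with Lebesgue densities $p,q$, $\{q>0\}\subset\{p>0\}$, and density ratio $r_0=q/p$ (with $0/0=0$). Expectations are over both the test point and the randomness of $\hat\theta_N$. *)

theory Defs
  imports "HOL-Analysis.Analysis" "HOL-Probability.Probability"
begin

definition linf :: "real^'n \<Rightarrow> real" where
  "linf x = Max (range (\<lambda>i. \<bar>x $ i\<bar>))"

text \<open>Real power with the convention t^0 = 1 (also for t = 0).\<close>
definition rpow :: "real \<Rightarrow> real \<Rightarrow> real" where
  "rpow t a = (if a = 0 then 1 else t powr a)"

end

theory Submission
  imports Defs
begin

(*
  Since q = r p with r = q / p, the risk under q is the risk under p weighted by r.  Split at
  \<parallel>x\<parallel>\<^sub>\<infinity> = (4 / \<sigma>) ln N.  Below it the growth bound gives r x \<le> c\<^sub>1 (ln N)^m.  Above it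
  exp (\<sigma> \<parallel>x\<parallel>\<^sub>\<infinity>) \<ge> N^4, and AM-GM bounds both r and \<parallel>\<theta>\<^sub>0\<parallel>\<^sub>\<infinity>^2 r by
  (r^2 + \<parallel>\<theta>\<^sub>0\<parallel>\<^sub>\<infinity>^8 + exp (\<sigma> \<parallel>x\<parallel>\<^sub>\<infinity>)) / N, which has finite p-expectation; as the squared error
  is at most 2 d\<^sub>\<theta> (\<xi>\<^sub>N^2 + \<parallel>\<theta>\<^sub>0\<parallel>\<^sub>\<infinity>^2), the tail contributes O(d\<^sub>\<theta> (\<xi>\<^sub>N^2 + 1) / N).
*)

lemma abs_nth_le_linf: "\<bar>x $ i\<bar> \<le> linf x"
  unfolding linf_def by (rule Max_ge) auto

lemma linf_nonneg: "0 \<le> linf x"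
  using abs_nth_le_linf[of x] abs_ge_zero order_trans by blast

lemma norm_sq_le_card_linf_sq: "(norm (x::real^'n))\<^sup>2 \<le> real CARD('n) * (linf x)\<^sup>2"
proof -
  have "(norm x)\<^sup>2 = (\<Sum>i\<in>UNIV. (x $ i)\<^sup>2)"
    unfolding power2_norm_eq_inner inner_vec_def by (simp add: power2_eq_square)
  also have "\<dots> \<le> (\<Sum>i\<in>(UNIV::'n set). (linf x)\<^sup>2)"
    by (intro sum_mono) (metis abs_nth_le_linf abs_le_square_iff abs_of_nonneg linf_nonneg)
  finally show ?thesis by simp
qed

lemma norm_diff_sq_le_linf:
  fixes a b :: "real^'n"
  shows "(norm (a - b))\<^sup>2 \<le> 2 * real CARD('n) * ((linf a)\<^sup>2 + (linf b)\<^sup>2)"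
proof -
  have "norm (a - b) \<le> norm a + norm b" by (rule norm_triangle_ineq4)
  then have "(norm (a - b))\<^sup>2 \<le> (norm a + norm b)\<^sup>2" by (simp add: power_mono)
  also have "\<dots> \<le> 2 * (norm a)\<^sup>2 + 2 * (norm b)\<^sup>2"
    using zero_le_power2[of "norm a - norm b"] by (simp add: power2_eq_square algebra_simps)
  also have "\<dots> \<le> 2 * (real CARD('n) * (linf a)\<^sup>2) + 2 * (real CARD('n) * (linf b)\<^sup>2)"
    using norm_sq_le_card_linf_sq[of a] norm_sq_le_card_linf_sq[of b] by linarith
  finally show ?thesis by (simp add: algebra_simps)
qed

lemma sq_le_one_plus_pow8: "(t::real)\<^sup>2 \<le> 1 + t ^ 8"
proof (cases "t\<^sup>2 \<le> 1")
  case True then show ?thesis by (simp add: zero_le_even_power add_increasing2)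
next
  case False
  then have "(t\<^sup>2) ^ 1 \<le> (t\<^sup>2) ^ 4" by (intro power_increasing) auto
  then show ?thesis by (simp flip: power_mult)
qed

lemma rpow_plus_one_le_log_rpow:
  fixes K l m n :: real
  assumes "m \<ge> 0" "K > 0" "n \<ge> 2" "0 \<le> l" "l \<le> K * ln n"
  shows "rpow l m + 1 \<le> (K powr m + (1 / ln 2) powr m) * rpow (ln n) m"
proof (cases "m = 0")
  case True then show ?thesis using assms by (simp add: rpow_def)
next
  case False
  have "ln 2 \<le> ln n" using assms by simp
  then have ln_n: "ln n > 0" using ln_gt_zero[of 2] by linarith
  have "l powr m \<le> (K * ln n) powr m" using assms by (intro powr_mono2) auto
  also have "\<dots> = K powr m * ln n powr m" using assms ln_n by (simp add: powr_mult)
  finally have "l powr m \<le> K powr m * ln n powr m" .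
  moreover have "1 \<le> (1 / ln 2) powr m * ln n powr m"
  proof -
    have "1 \<le> ln n / ln 2" using \<open>ln 2 \<le> ln n\<close> by simp
    then have "1 \<le> (ln n / ln 2) powr m" using assms by (simp add: ge_one_powr_ge_zero)
    then show ?thesis using ln_n by (simp add: powr_mult[symmetric])
  qed
  ultimately show ?thesis using False by (simp add: rpow_def algebra_simps)
qed

lemma power4_le_exp_beyond_log:
  fixes \<sigma> l n :: real
  assumes "\<sigma> > 0" "n > 0" "4 / \<sigma> * ln n \<le> l"
  shows "n ^ 4 \<le> exp (\<sigma> * l)"
proof -
  have "n ^ 4 = exp (4 * ln n)"
    using exp_of_nat_mult[of 4 "ln n"] assms(2) by simp
  also have "\<dots> \<le> exp (\<sigma> * l)" using assms by (simp add: field_simps)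
  finally show ?thesis .
qed

lemma tail_weight_le_moments_div:
  fixes n w t E :: real
  assumes "n \<ge> 1" "w \<ge> 0" "n ^ 4 \<le> E"
  shows "w \<le> (w\<^sup>2 + t ^ 8 + E) / n"
    and "t\<^sup>2 * w \<le> (w\<^sup>2 + t ^ 8 + E) / n"
proof -
  have t8: "0 \<le> t ^ 8" by (simp add: zero_le_even_power)
  have "n\<^sup>2 \<le> n ^ 4" using assms(1) by (simp add: power_increasing)
  moreover have "2 * n * w \<le> w\<^sup>2 + n\<^sup>2"
    using zero_le_power2[of "w - n"] by (simp add: power2_eq_square algebra_simps)
  ultimately have "n * w \<le> w\<^sup>2 + t ^ 8 + E"
    using assms t8 zero_le_power2[of w] zero_le_power[of n 4] by linarith
  then show "w \<le> (w\<^sup>2 + t ^ 8 + E) / n" using assms(1) by (simp add: field_simps)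
  have "2 * n * (t\<^sup>2 * w) \<le> w\<^sup>2 + n\<^sup>2 * t ^ 4"
    using zero_le_power2[of "w - n * t\<^sup>2"] by (simp add: power2_eq_square algebra_simps power4_eq_xxxx)
  moreover have "2 * n\<^sup>2 * t ^ 4 \<le> t ^ 8 + n ^ 4"
  proof -
    have "(t ^ 4 - n\<^sup>2)\<^sup>2 = t ^ 8 - 2 * n\<^sup>2 * t ^ 4 + n ^ 4" by algebra
    then show ?thesis using zero_le_power2[of "t ^ 4 - n\<^sup>2"] by linarith
  qed
  ultimately have "n * (t\<^sup>2 * w) \<le> w\<^sup>2 + t ^ 8 + E"
    using assms t8 zero_le_power2[of w] zero_le_power[of n 4] by linarith
  then show "t\<^sup>2 * w \<le> (w\<^sup>2 + t ^ 8 + E) / n" using assms(1) by (simp add: field_simps)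
qed

lemma weighted_error_le_split:
  fixes e w B D xi t n E :: real
  assumes "n \<ge> 1" "0 \<le> e" "0 \<le> w" "0 \<le> B" "0 \<le> D" "0 \<le> E"
    and "e \<le> 2 * D * (xi\<^sup>2 + t\<^sup>2)" and "w \<le> B \<or> n ^ 4 \<le> E"
  shows "e * w \<le> B * e + 2 * D * (xi\<^sup>2 + 1) / n * (w\<^sup>2 + t ^ 8 + E)"
proof -
  define G where "G = (w\<^sup>2 + t ^ 8 + E) / n"
  have "0 \<le> G" unfolding G_def using assms by (simp add: zero_le_even_power)
  then have tail_nonneg: "0 \<le> 2 * D * (xi\<^sup>2 + 1) * G" using assms by simp
  have "e * w \<le> B * e + 2 * D * (xi\<^sup>2 + 1) * G"
  proof (cases "w \<le> B")
    case True
    then have "e * w \<le> B * e" using assms mult_left_mono[OF True, of e] by (simp add: mult.commute)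
    then show ?thesis using tail_nonneg by linarith
  next
    case False
    then have "n ^ 4 \<le> E" using assms by auto
    note tail = tail_weight_le_moments_div[OF assms(1,3) this, of t, folded G_def]
    have "e * w \<le> 2 * D * (xi\<^sup>2 * w + t\<^sup>2 * w)"
      using mult_right_mono[OF assms(7,3)] by (simp add: algebra_simps)
    also have "\<dots> \<le> 2 * D * (xi\<^sup>2 * G + G)"
      using tail assms by (intro mult_left_mono add_mono) auto
    finally have "e * w \<le> 2 * D * (xi\<^sup>2 + 1) * G" by (simp add: algebra_simps)
    then show ?thesis using assms by (simp add: add_increasing)
  qed
  then show ?thesis unfolding G_def by simp
qed

lemma (in prob_space) distr_pair_snd:
  assumes "sigma_finite_measure N"
  shows "distr (M \<Otimes>\<^sub>M N) N snd = N"
proof (intro measure_eqI)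
  fix A assume A: "A \<in> sets (distr (M \<Otimes>\<^sub>M N) N snd)"
  then have "emeasure (distr (M \<Otimes>\<^sub>M N) N snd) A = emeasure (M \<Otimes>\<^sub>M N) (space M \<times> A)"
    by (auto simp add: emeasure_distr space_pair_measure dest: sets.sets_into_space
        intro!: arg_cong2[where f=emeasure])
  with A assms show "emeasure (distr (M \<Otimes>\<^sub>M N) N snd) A = emeasure N A"
    by (simp add: sigma_finite_measure.emeasure_pair_measure_Times emeasure_space_1)
qed simp

lemma (in prob_space)
  fixes g :: "'b \<Rightarrow> real"
  assumes "sigma_finite_measure N" "integrable N g"
  shows integrable_pair_snd: "integrable (M \<Otimes>\<^sub>M N) (\<lambda>z. g (snd z))"
    and integral_pair_snd: "(\<integral>z. g (snd z) \<partial>(M \<Otimes>\<^sub>M N)) = integral\<^sup>L N g"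
proof -
  have "g \<in> borel_measurable N" using assms(2) by auto
  then show "integrable (M \<Otimes>\<^sub>M N) (\<lambda>z. g (snd z))"
      and "(\<integral>z. g (snd z) \<partial>(M \<Otimes>\<^sub>M N)) = integral\<^sup>L N g"
    using integrable_distr_eq[of snd "M \<Otimes>\<^sub>M N" N g] integral_distr[of snd "M \<Otimes>\<^sub>M N" N g]
      distr_pair_snd[OF assms(1)] assms(2) by simp_all
qed

lemma pair_measure_density_snd:
  assumes "g \<in> borel_measurable N" "sigma_finite_measure N" "sigma_finite_measure (density N g)"
  shows "M \<Otimes>\<^sub>M density N g = density (M \<Otimes>\<^sub>M N) (\<lambda>z. g (snd z))"
proof -
  have "M \<Otimes>\<^sub>M density N g = density M (\<lambda>_. 1) \<Otimes>\<^sub>M density N g" by (simp add: density_1)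
  also have "\<dots> = density (M \<Otimes>\<^sub>M N) (\<lambda>(x, y). 1 * g y)"
    using assms by (intro pair_measure_density) auto
  finally show ?thesis by (simp add: case_prod_unfold)
qed

lemma measurable_pair_density_eq:
  "f \<in> measurable (M \<Otimes>\<^sub>M density N g) L \<longleftrightarrow> f \<in> measurable (M \<Otimes>\<^sub>M N) L"
  by (simp add: measurable_cong_sets[OF sets_pair_measure_cong[OF refl sets_density] refl])

lemma integral_pair_density_ratio:
  fixes f :: "'b \<times> 'a \<Rightarrow> real" and p q :: "'a \<Rightarrow> real"
  assumes f: "f \<in> borel_measurable (M \<Otimes>\<^sub>M N)"
    and p: "p \<in> borel_measurable N" "\<And>x. 0 \<le> p x"
    and q: "q \<in> borel_measurable N" "\<And>x. 0 \<le> q x"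
    and supp: "{x. q x > 0} \<subseteq> {x. p x > 0}"
    and sf: "sigma_finite_measure (density N p)" "sigma_finite_measure (density N q)"
  shows "(\<integral>z. f z \<partial>(M \<Otimes>\<^sub>M density N q))
       = (\<integral>z. f z * (q (snd z) / p (snd z)) \<partial>(M \<Otimes>\<^sub>M density N p))"
proof -
  let ?r = "\<lambda>x. q x / p x"
  have r_nonneg: "0 \<le> ?r x" for x using p q by simp
  have "density N q = density N (\<lambda>x. ennreal (p x) * ennreal (?r x))"
  proof (rule density_cong)
    show "AE x in N. ennreal (q x) = ennreal (p x) * ennreal (?r x)"
    proof (intro AE_I2)
      fix x
      show "ennreal (q x) = ennreal (p x) * ennreal (?r x)"
      proof (cases "p x = 0")
        case True
        then have "q x = 0" using supp q(2)[of x] by (auto simp: less_le)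
        with True show ?thesis by simp
      next
        case False
        then show ?thesis using p(2)[of x] r_nonneg[of x] by (simp flip: ennreal_mult)
      qed
    qed
  qed (use p q in auto)
  also have "\<dots> = density (density N p) ?r"
    using p q by (simp add: density_density_eq)
  finally have q_eq: "density N q = density (density N p) ?r" .
  have "M \<Otimes>\<^sub>M density N q = density (M \<Otimes>\<^sub>M density N p) (\<lambda>z. ?r (snd z))"
    unfolding q_eq using p q sf q_eq by (intro pair_measure_density_snd) auto
  moreover have "f \<in> borel_measurable (M \<Otimes>\<^sub>M density N p)"
    using f by (simp add: measurable_pair_density_eq)
  ultimately show ?thesis
    using p q r_nonneg by (simp add: integral_density mult.commute)
qed

locale covariate_shift =
  fixes p q :: "real^'d \<Rightarrow> real"
    and M :: "'w measure"
    and theta0 :: "real^'d \<Rightarrow> real^'k"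
    and thetahat :: "nat \<Rightarrow> 'w \<Rightarrow> real^'d \<Rightarrow> real^'k"
    and xi :: "nat \<Rightarrow> real"
    and c m \<sigma> :: real
  assumes M: "prob_space M"
    and p_meas: "p \<in> borel_measurable lborel" and q_meas: "q \<in> borel_measurable lborel"
    and p_nonneg: "\<And>x. p x \<ge> 0" and q_nonneg: "\<And>x. q x \<ge> 0"
    and p_prob: "prob_space (density lborel (\<lambda>x. ennreal (p x)))"
    and q_prob: "prob_space (density lborel (\<lambda>x. ennreal (q x)))"
    and supp: "{x. q x > 0} \<subseteq> {x. p x > 0}"
    and theta0_meas: "theta0 \<in> borel_measurable borel"
    and thetahat_meas: "\<And>N. N \<ge> 1 \<Longrightarrow>
          (\<lambda>z. thetahat N (fst z) (snd z)) \<in> borel_measurable (M \<Otimes>\<^sub>M lborel)"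
    and bdd: "\<And>N. N \<ge> 1 \<Longrightarrow>
          AE z in M \<Otimes>\<^sub>M density lborel (\<lambda>x. ennreal (p x)).
            linf (thetahat N (fst z) (snd z)) \<le> xi N"
    and mom8: "integrable (density lborel (\<lambda>x. ennreal (p x))) (\<lambda>x. linf (theta0 x) ^ 8)"
    and c_pos: "c > 0" and m_nonneg: "m \<ge> 0"
    and ratio_growth: "\<And>x. q x / p x \<le> c * (rpow (linf x) m + 1)"
    and ratio_L2: "integrable (density lborel (\<lambda>x. ennreal (p x))) (\<lambda>x. (q x / p x)\<^sup>2)"
    and \<sigma>_pos: "\<sigma> > 0"
    and exp_moment: "integrable (density lborel (\<lambda>x. ennreal (p x))) (\<lambda>x. exp (\<sigma> * linf x))"
begin

abbreviation P :: "(real^'d) measure" where "P \<equiv> density lborel (\<lambda>x. ennreal (p x))"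
abbreviation Q :: "(real^'d) measure" where "Q \<equiv> density lborel (\<lambda>x. ennreal (q x))"
abbreviation ratio :: "real^'d \<Rightarrow> real" where "ratio x \<equiv> q x / p x"
abbreviation sq_err :: "nat \<Rightarrow> 'w \<times> (real^'d) \<Rightarrow> real" where
  "sq_err N z \<equiv> (norm (thetahat N (fst z) (snd z) - theta0 (snd z)))\<^sup>2"

definition tail_moment :: "real^'d \<Rightarrow> real" where
  "tail_moment x = (ratio x)\<^sup>2 + linf (theta0 x) ^ 8 + exp (\<sigma> * linf x)"

(* The cut-off (4 / \<sigma>) ln N makes exp (\<sigma> \<parallel>x\<parallel>\<^sub>\<infinity>) \<ge> N^4 beyond it; the summand
   (1 / ln 2) powr m absorbs the constant term of the growth bound, as ln N \<ge> ln 2. *)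
definition log_const :: real where
  "log_const = c * ((4 / \<sigma>) powr m + (1 / ln 2) powr m)"

lemma sigma_finite_P: "sigma_finite_measure P"
  and sigma_finite_Q: "sigma_finite_measure Q"
  using p_prob q_prob by (simp_all add: prob_space_imp_sigma_finite)

lemma ratio_measurable: "ratio \<in> borel_measurable P"
  using p_meas q_meas by simp

lemma sq_err_measurable:
  assumes "N \<ge> 1"
  shows "sq_err N \<in> borel_measurable (M \<Otimes>\<^sub>M lborel)"
proof -
  have "theta0 \<in> borel_measurable lborel" using theta0_meas by simp
  then show ?thesis using thetahat_meas[OF assms] by measurable
qed

lemma risk_change_of_measure:
  assumes "N \<ge> 1"
  shows "(\<integral>z. sq_err N z \<partial>(M \<Otimes>\<^sub>M Q)) = (\<integral>z. sq_err N z * ratio (snd z) \<partial>(M \<Otimes>\<^sub>M P))"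
  using sq_err_measurable[OF assms] p_meas q_meas p_nonneg q_nonneg supp sigma_finite_P sigma_finite_Q
  by (intro integral_pair_density_ratio) auto

lemma sq_err_le_AE:
  assumes "N \<ge> 1"
  shows "AE z in M \<Otimes>\<^sub>M P. sq_err N z \<le> 2 * real CARD('k) * ((xi N)\<^sup>2 + (linf (theta0 (snd z)))\<^sup>2)"
  using bdd[OF assms]
proof eventually_elim
  case (elim z)
  let ?a = "thetahat N (fst z) (snd z)" and ?b = "theta0 (snd z)"
  have "(linf ?a)\<^sup>2 \<le> (xi N)\<^sup>2"
    using elim linf_nonneg by (intro power_mono)
  then have "2 * real CARD('k) * ((linf ?a)\<^sup>2 + (linf ?b)\<^sup>2)
      \<le> 2 * real CARD('k) * ((xi N)\<^sup>2 + (linf ?b)\<^sup>2)"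
    by (intro mult_left_mono) auto
  with norm_diff_sq_le_linf[of ?a ?b] show ?case by linarith
qed

lemma prob_space_M_P: "prob_space (M \<Otimes>\<^sub>M P)"
  using M p_prob by (rule prob_space_pair)

lemma integrable_sq_err:
  assumes "N \<ge> 1"
  shows "integrable (M \<Otimes>\<^sub>M P) (sq_err N)"
proof (rule Bochner_Integration.integrable_bound)
  let ?D = "2 * real CARD('k)"
  show "integrable (M \<Otimes>\<^sub>M P) (\<lambda>z. ?D * ((xi N)\<^sup>2 + 1) + ?D * linf (theta0 (snd z)) ^ 8)"
    using prob_space.integrable_pair_snd[OF M sigma_finite_P mom8]
      finite_measure.integrable_const[OF prob_space.finite_measure[OF prob_space_M_P]]
    by (intro Bochner_Integration.integrable_add integrable_mult_right)
  show "AE z in M \<Otimes>\<^sub>M P. norm (sq_err N z) \<le> norm (?D * ((xi N)\<^sup>2 + 1) + ?D * linf (theta0 (snd z)) ^ 8)"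
    using sq_err_le_AE[OF assms]
  proof eventually_elim
    case (elim z)
    have "sq_err N z \<le> ?D * ((xi N)\<^sup>2 + 1) + ?D * linf (theta0 (snd z)) ^ 8"
      using elim sq_le_one_plus_pow8[of "linf (theta0 (snd z))"]
      by (smt (verit) distrib_left mult_left_mono of_nat_0_le_iff)
    then show ?case by (simp add: zero_le_even_power)
  qed
qed (use sq_err_measurable[OF assms] in \<open>simp add: measurable_pair_density_eq\<close>)

lemma integrable_tail_moment: "integrable P tail_moment"
  unfolding tail_moment_def using ratio_L2 mom8 exp_moment by simp

lemma ratio_le_log_or_power4_le_exp:
  assumes "n \<ge> 2"
  shows "ratio x \<le> log_const * rpow (ln n) m \<or> n ^ 4 \<le> exp (\<sigma> * linf x)"
proof (cases "linf x \<le> 4 / \<sigma> * ln n")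
  case True
  have "ratio x \<le> c * (rpow (linf x) m + 1)" by (rule ratio_growth)
  also have "\<dots> \<le> log_const * rpow (ln n) m"
    using rpow_plus_one_le_log_rpow[OF m_nonneg _ assms linf_nonneg True] \<sigma>_pos c_pos
    unfolding log_const_def by (simp add: mult.assoc)
  finally show ?thesis ..
next
  case False
  then show ?thesis using power4_le_exp_beyond_log[OF \<sigma>_pos, of n "linf x"] assms by simp
qed

lemma weighted_sq_err_le_AE:
  assumes "N \<ge> 2"
  shows "AE z in M \<Otimes>\<^sub>M P. sq_err N z * ratio (snd z)
    \<le> log_const * rpow (ln N) m * sq_err N z
       + 2 * real CARD('k) * ((xi N)\<^sup>2 + 1) / N * tail_moment (snd z)"
proof -
  have "0 \<le> log_const" unfolding log_const_def using c_pos by simp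
  moreover have "0 \<le> rpow (ln N) m" unfolding rpow_def by simp
  moreover have "N \<ge> 1" using assms by simp
  note sq_err_le_AE[OF this]
  then show ?thesis
  proof eventually_elim
    case (elim z)
    show ?case
      using weighted_error_le_split[OF _ _ _ _ _ _ elim ratio_le_log_or_power4_le_exp]
        \<open>0 \<le> log_const\<close> \<open>0 \<le> rpow (ln N) m\<close> assms p_nonneg q_nonneg
      unfolding tail_moment_def by simp
  qed
qed

lemma weighted_risk_le:
  assumes "N \<ge> 2"
  shows "(\<integral>z. sq_err N z * ratio (snd z) \<partial>(M \<Otimes>\<^sub>M P))
    \<le> log_const * rpow (ln N) m * (\<integral>z. sq_err N z \<partial>(M \<Otimes>\<^sub>M P))
       + 2 * real CARD('k) * ((xi N)\<^sup>2 + 1) / N * integral\<^sup>L P tail_moment"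
proof -
  let ?B = "log_const * rpow (ln N) m" and ?C = "2 * real CARD('k) * ((xi N)\<^sup>2 + 1) / N"
  have bound_int: "integrable (M \<Otimes>\<^sub>M P) (\<lambda>z. ?B * sq_err N z + ?C * tail_moment (snd z))"
    using integrable_sq_err prob_space.integrable_pair_snd[OF M sigma_finite_P integrable_tail_moment]
      assms by simp
  have "integrable (M \<Otimes>\<^sub>M P) (\<lambda>z. sq_err N z * ratio (snd z))"
  proof (rule Bochner_Integration.integrable_bound[OF bound_int])
    have "sq_err N \<in> borel_measurable (M \<Otimes>\<^sub>M P)"
      using sq_err_measurable assms by (simp add: measurable_pair_density_eq)
    then show "(\<lambda>z. sq_err N z * ratio (snd z)) \<in> borel_measurable (M \<Otimes>\<^sub>M P)"
      using measurable_compose[OF measurable_snd ratio_measurable] by (rule borel_measurable_times)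
    show "AE z in M \<Otimes>\<^sub>M P. norm (sq_err N z * ratio (snd z)) \<le> norm (?B * sq_err N z + ?C * tail_moment (snd z))"
      using weighted_sq_err_le_AE[OF assms] by eventually_elim (simp add: p_nonneg q_nonneg)
  qed
  then have "(\<integral>z. sq_err N z * ratio (snd z) \<partial>(M \<Otimes>\<^sub>M P))
      \<le> (\<integral>z. ?B * sq_err N z + ?C * tail_moment (snd z) \<partial>(M \<Otimes>\<^sub>M P))"
    using bound_int weighted_sq_err_le_AE[OF assms] by (intro integral_mono_AE)
  also have "\<dots> = ?B * (\<integral>z. sq_err N z \<partial>(M \<Otimes>\<^sub>M P)) + ?C * integral\<^sup>L P tail_moment"
    using integrable_sq_err prob_space.integrable_pair_snd[OF M sigma_finite_P integrable_tail_moment]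
      prob_space.integral_pair_snd[OF M sigma_finite_P integrable_tail_moment] assms by simp
  finally show ?thesis .
qed

end

theorem proposition4p3:
  fixes p q :: "real^'d \<Rightarrow> real"
    and M :: "'w measure"
    and theta0 :: "real^'d \<Rightarrow> real^'k"
    and thetahat :: "nat \<Rightarrow> 'w \<Rightarrow> real^'d \<Rightarrow> real^'k"
    and xi :: "nat \<Rightarrow> real"
    and c m :: real
  assumes M: "prob_space M"
    and p_meas: "p \<in> borel_measurable lborel" and q_meas: "q \<in> borel_measurable lborel"
    and p_nonneg: "\<And>x. p x \<ge> 0" and q_nonneg: "\<And>x. q x \<ge> 0"
    and p_prob: "prob_space (density lborel (\<lambda>x. ennreal (p x)))"
    and q_prob: "prob_space (density lborel (\<lambda>x. ennreal (q x)))"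
    and supp: "{x. q x > 0} \<subseteq> {x. p x > 0}"
    and theta0_meas: "theta0 \<in> borel_measurable borel"
    and thetahat_meas: "\<And>N. N \<ge> 1 \<Longrightarrow>
          (\<lambda>z. thetahat N (fst z) (snd z)) \<in> borel_measurable (M \<Otimes>\<^sub>M lborel)"
    and bdd: "\<And>N. N \<ge> 1 \<Longrightarrow>
          AE z in M \<Otimes>\<^sub>M density lborel (\<lambda>x. ennreal (p x)).
            linf (thetahat N (fst z) (snd z)) \<le> xi N"
    and mom8: "integrable (density lborel (\<lambda>x. ennreal (p x))) (\<lambda>x. linf (theta0 x) ^ 8)"
    and c_pos: "c > 0" and m_nonneg: "m \<ge> 0"
    and ratio_growth: "\<And>x. q x / p x \<le> c * (rpow (linf x) m + 1)"
    and ratio_L2: "integrable (density lborel (\<lambda>x. ennreal (p x))) (\<lambda>x. (q x / p x)\<^sup>2)"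
    and expmom: "\<exists>\<sigma>>0. integrable (density lborel (\<lambda>x. ennreal (p x)))
                         (\<lambda>x. exp (\<sigma> * linf x))"
  shows "\<exists>c1 c2. \<forall>N::nat. N \<ge> 2 \<longrightarrow>
     (\<integral>z. (norm (thetahat N (fst z) (snd z) - theta0 (snd z)))\<^sup>2
        \<partial>(M \<Otimes>\<^sub>M density lborel (\<lambda>x. ennreal (q x))))
     = (\<integral>z. (norm (thetahat N (fst z) (snd z) - theta0 (snd z)))\<^sup>2 * (q (snd z) / p (snd z))
        \<partial>(M \<Otimes>\<^sub>M density lborel (\<lambda>x. ennreal (p x))))
   \<and> (\<integral>z. (norm (thetahat N (fst z) (snd z) - theta0 (snd z)))\<^sup>2 * (q (snd z) / p (snd z))
        \<partial>(M \<Otimes>\<^sub>M density lborel (\<lambda>x. ennreal (p x))))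
     \<le> c1 * rpow (ln (real N)) m *
          (\<integral>z. (norm (thetahat N (fst z) (snd z) - theta0 (snd z)))\<^sup>2
             \<partial>(M \<Otimes>\<^sub>M density lborel (\<lambda>x. ennreal (p x))))
       + c2 * real CARD('k) * ((xi N)\<^sup>2 + 1) / real N"
proof -
  obtain \<sigma> where \<sigma>: "\<sigma> > 0"
    and exp_moment: "integrable (density lborel (\<lambda>x. ennreal (p x))) (\<lambda>x. exp (\<sigma> * linf x))"
    using expmom by blast
  interpret covariate_shift p q M theta0 thetahat xi c m \<sigma>
    by (rule covariate_shift.intro) (fact assms \<sigma> exp_moment)+
  show ?thesis
  proof (rule exI[of _ log_const], rule exI[of _ "2 * integral\<^sup>L P tail_moment"], intro allI impI conjI)
    fix N :: nat
    assume N: "N \<ge> 2"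
    then show "(\<integral>z. sq_err N z \<partial>(M \<Otimes>\<^sub>M Q)) = (\<integral>z. sq_err N z * ratio (snd z) \<partial>(M \<Otimes>\<^sub>M P))"
      by (intro risk_change_of_measure) simp
    show "(\<integral>z. sq_err N z * ratio (snd z) \<partial>(M \<Otimes>\<^sub>M P))
      \<le> log_const * rpow (ln (real N)) m * (\<integral>z. sq_err N z \<partial>(M \<Otimes>\<^sub>M P))
        + 2 * integral\<^sup>L P tail_moment * real CARD('k) * ((xi N)\<^sup>2 + 1) / real N"
      using weighted_risk_le[OF N] by (simp add: field_simps)
  qed
qed

end
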